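(* Let $\mathcal E$ be an exchangeability system for a noncommutative probability space $(\mathcal A,\phi)$, let $X_1,\dots,X_n\in\mathcal A$, let $\omega$ be a primitive $n$-th root of unity and $X_j^\omega=\sum_{k=1}^n\omega^kX_j^{(k)}$. If $j_1<j_2<\dots<j_m$ is a subsequence of $1,2,\dots,n$ with $m<n$, then $\tilde\phi(X_{j_1}^\omega X_{j_2}^\omega\cdots X_{j_m}^\omega)=0$.
   Context: A noncommutative probability space is a pair $(\mathcal A,\phi)$ of a complex unital algebra $\mathcal A$ and a unital linear functional $\phi$. An exchangeability system $\mathcal E$ for $(\mathcal A,\phi)$ consists of a noncommutative probability space $(\mathcal U,\tilde\phi)$ and a family $(\iota_k)_{k\in\mathbb N}$ of embeddings (injective unital algebra homomorphisms) $\iota_k:\mathcal A\to\mathcal A_k\subseteq\mathcal U$ with $\tilde\phi\circ\iota_k=\phi$; write $X^{(k)}=\iota_k(X)$. It is required that for all $X_1,\dots,X_n\in\mathcal A$, all indices $i_1,\dots,i_n\in\mathbb N$ and every bijection $\sigma$ of $\mathbb N$, $\tilde\phi(X_1^{(i_1)}\cdots X_n^{(i_n)})=\tilde\phi(X_1^{(\sigma(i_1))}\cdots X_n^{(\sigma(i_n))})$. *)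

theory Defs
  imports Complex_Main
begin

class complex_algebra_1 = ring_1 +
  fixes scaleC :: "complex \<Rightarrow> 'a \<Rightarrow> 'a" (infixr "*\<^sub>C" 75)
  assumes scaleC_add_right: "c *\<^sub>C (x + y) = c *\<^sub>C x + c *\<^sub>C y"
    and scaleC_add_left: "(c + d) *\<^sub>C x = c *\<^sub>C x + d *\<^sub>C x"
    and scaleC_scaleC: "c *\<^sub>C (d *\<^sub>C x) = (c * d) *\<^sub>C x"
    and scaleC_one: "1 *\<^sub>C x = x"
    and mult_scaleC_left: "(c *\<^sub>C x) * y = c *\<^sub>C (x * y)"
    and mult_scaleC_right: "x * (c *\<^sub>C y) = c *\<^sub>C (x * y)"

definition ncps :: "('a::complex_algebra_1 \<Rightarrow> complex) \<Rightarrow> bool" where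
  "ncps \<phi> \<longleftrightarrow> (\<forall>x y. \<phi> (x + y) = \<phi> x + \<phi> y) \<and> (\<forall>c x. \<phi> (c *\<^sub>C x) = c * \<phi> x)
      \<and> \<phi> 1 = 1"

definition alg_embedding :: "('a::complex_algebra_1 \<Rightarrow> 'b::complex_algebra_1) \<Rightarrow> bool" where
  "alg_embedding f \<longleftrightarrow> inj f \<and> f 1 = 1 \<and> (\<forall>x y. f (x + y) = f x + f y)
      \<and> (\<forall>x y. f (x * y) = f x * f y) \<and> (\<forall>c x. f (c *\<^sub>C x) = c *\<^sub>C f x)"

text \<open>Exchangeability system (U, phi~, (iota_k)) for (A, phi); indices range over nat.
  A mixed word X_1^(i_1)...X_n^(i_n) is given as a list of pairs (X_l, i_l).\<close>
definition exchangeability_system ::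
  "('a::complex_algebra_1 \<Rightarrow> complex) \<Rightarrow> ('u::complex_algebra_1 \<Rightarrow> complex) \<Rightarrow> (nat \<Rightarrow> 'a \<Rightarrow> 'u) \<Rightarrow> bool" where
  "exchangeability_system \<phi> \<phi>t \<iota> \<longleftrightarrow>
     ncps \<phi> \<and> ncps \<phi>t \<and> (\<forall>k. alg_embedding (\<iota> k)) \<and> (\<forall>k. \<phi>t \<circ> \<iota> k = \<phi>) \<and>
     (\<forall>(ws :: ('a \<times> nat) list) \<sigma>. bij \<sigma> \<longrightarrow>
        \<phi>t (prod_list (map (\<lambda>(x, i). \<iota> i x) ws)) =
        \<phi>t (prod_list (map (\<lambda>(x, i). \<iota> (\<sigma> i) x) ws)))"

definition primitive_root_of_unity :: "nat \<Rightarrow> complex \<Rightarrow> bool" where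
  "primitive_root_of_unity n \<omega> \<longleftrightarrow> n > 0 \<and> \<omega> ^ n = 1 \<and> (\<forall>k. 0 < k \<and> k < n \<longrightarrow> \<omega> ^ k \<noteq> 1)"

end

theory Submission
  imports Defs
begin

text \<open>Multiplying out, the moment becomes a sum of mixed moments
  \<open>\<phi>t (\<iota> k\<^sub>1 x\<^sub>1 \<cdots> \<iota> k\<^sub>m x\<^sub>m)\<close> weighted by \<open>\<omega> ^ (k\<^sub>1 + \<dots> + k\<^sub>m)\<close>.
  Relabelling the copies by the cyclic shift \<open>k \<mapsto> k + 1 (mod n)\<close> of \<open>{1..n}\<close> leaves every
  mixed moment unchanged by exchangeability but multiplies every weight by \<open>\<omega> ^ m\<close>. Hence
  the sum \<open>S\<close> satisfies \<open>S = \<omega> ^ m * S\<close>, and \<open>\<omega> ^ m \<noteq> 1\<close> because \<open>\<omega>\<close> is primitive and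
  \<open>0 < m < n\<close>.\<close>

lemma ncps_zero: "ncps \<phi> \<Longrightarrow> \<phi> 0 = 0"
  unfolding ncps_def by (metis add_cancel_right_left add_0)

lemma ncps_sum: "ncps \<phi> \<Longrightarrow> \<phi> (sum f A) = (\<Sum>a\<in>A. \<phi> (f a))"
  by (induction A rule: infinite_finite_induct) (auto simp: ncps_zero ncps_def)

definition mixed_word :: "(nat \<Rightarrow> 'a \<Rightarrow> 'u::complex_algebra_1) \<Rightarrow> 'a list \<Rightarrow> nat list \<Rightarrow> 'u" where
  "mixed_word \<iota> xs ks = prod_list (map (\<lambda>(x, i). \<iota> i x) (zip xs ks))"

lemma prod_list_sum_expand:
  fixes \<iota> :: "nat \<Rightarrow> 'a \<Rightarrow> 'u::complex_algebra_1"
  shows "prod_list (map (\<lambda>x. \<Sum>k\<in>K. c k *\<^sub>C \<iota> k x) xs)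
    = (\<Sum>ks\<in>{ks. set ks \<subseteq> K \<and> length ks = length xs}. prod_list (map c ks) *\<^sub>C mixed_word \<iota> xs ks)"
proof (induction xs)
  case Nil
  have "{ks. set ks \<subseteq> K \<and> length ks = 0} = {[]}" by auto
  then show ?case by (simp add: mixed_word_def scaleC_one)
next
  case (Cons x xs)
  let ?L = "{ks. set ks \<subseteq> K \<and> length ks = length xs}"
  have "prod_list (map (\<lambda>x. \<Sum>k\<in>K. c k *\<^sub>C \<iota> k x) (x # xs))
     = (\<Sum>k\<in>K. c k *\<^sub>C \<iota> k x) * (\<Sum>ks\<in>?L. prod_list (map c ks) *\<^sub>C mixed_word \<iota> xs ks)"
    using Cons by simp
  also have "\<dots> = (\<Sum>ks\<in>?L. \<Sum>k\<in>K. (c k *\<^sub>C \<iota> k x) * (prod_list (map c ks) *\<^sub>C mixed_word \<iota> xs ks))"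
    by (simp add: sum_distrib_left sum_distrib_right sum.swap[of _ K])
  also have "\<dots> = (\<Sum>(ks, k)\<in>?L \<times> K. prod_list (map c (k # ks)) *\<^sub>C mixed_word \<iota> (x # xs) (k # ks))"
    by (simp add: sum.cartesian_product mixed_word_def mult_scaleC_left mult_scaleC_right
        scaleC_scaleC mult.commute)
  also have "\<dots> = (\<Sum>ks\<in>{ks. set ks \<subseteq> K \<and> length ks = length (x # xs)}.
      prod_list (map c ks) *\<^sub>C mixed_word \<iota> (x # xs) ks)"
    unfolding length_Cons lists_length_Suc_eq
    by (subst sum.reindex[OF inj_split_Cons]) (simp add: case_prod_unfold comp_def)
  finally show ?case .
qed

text \<open>Extended by the identity outside \<open>{1..n}\<close>, since exchangeability only speaks about
  bijections of all of \<open>nat\<close>.\<close>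

definition cyclic_shift :: "nat \<Rightarrow> nat \<Rightarrow> nat" where
  "cyclic_shift n k = (if 1 \<le> k \<and> k < n then k + 1 else if k = n then 1 else k)"

lemma bij_cyclic_shift:
  assumes "0 < n" shows "bij (cyclic_shift n)"
proof (rule o_bij)
  let ?back = "\<lambda>k. if 2 \<le> k \<and> k \<le> n then k - 1 else if k = 1 then n else k"
  show "?back \<circ> cyclic_shift n = id" "cyclic_shift n \<circ> ?back = id"
    using assms by (auto simp: cyclic_shift_def fun_eq_iff)
qed

lemma cyclic_shift_in_range: "k \<in> {1..n} \<Longrightarrow> cyclic_shift n k \<in> {1..n}"
  by (auto simp: cyclic_shift_def)

lemma power_cyclic_shift:
  fixes \<omega> :: "'a::monoid_mult"
  assumes "\<omega> ^ n = 1" "k \<in> {1..n}"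
  shows "\<omega> ^ cyclic_shift n k = \<omega> * \<omega> ^ k"
  using assms by (auto simp: cyclic_shift_def power_commutes)

lemma exchangeability_mixed_word_relabel:
  assumes "exchangeability_system \<phi> \<phi>t \<iota>" and "bij \<sigma>"
  shows "\<phi>t (mixed_word \<iota> xs (map \<sigma> ks)) = \<phi>t (mixed_word \<iota> xs ks)"
proof -
  have "map (\<lambda>(x, i). \<iota> i x) (zip xs (map \<sigma> ks)) = map (\<lambda>(x, i). \<iota> (\<sigma> i) x) (zip xs ks)"
    by (simp add: zip_map2 case_prod_unfold)
  then show ?thesis
    using assms unfolding mixed_word_def exchangeability_system_def by metis
qed

lemma shift_invariant_twisted_sum_eq_0:
  fixes F :: "nat list \<Rightarrow> complex"
  assumes "0 < n" "\<omega> ^ n = 1" "\<omega> ^ l \<noteq> 1"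
    and invariant: "\<And>ks. F (map (cyclic_shift n) ks) = F ks"
  shows "(\<Sum>ks\<in>{ks. set ks \<subseteq> {1..n} \<and> length ks = l}. prod_list (map ((^) \<omega>) ks) * F ks) = 0"
    (is "?S = 0")
proof -
  let ?L = "{ks. set ks \<subseteq> {1..n} \<and> length ks = l}"
  let ?\<sigma> = "cyclic_shift n"
  have twist: "prod_list (map ((^) \<omega>) (map ?\<sigma> ks)) = \<omega> ^ length ks * prod_list (map ((^) \<omega>) ks)"
    if "set ks \<subseteq> {1..n}" for ks
    using that by (induction ks) (auto simp: power_cyclic_shift[OF \<open>\<omega> ^ n = 1\<close>])
  have "inj_on (map ?\<sigma>) ?L"
    using inj_mapI[OF bij_is_inj[OF bij_cyclic_shift[OF \<open>0 < n\<close>]]] by (rule inj_on_subset) simp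
  moreover have "map ?\<sigma> ` ?L \<subseteq> ?L"
    using cyclic_shift_in_range by (fastforce simp del: atLeastAtMost_iff)
  ultimately have permutes: "map ?\<sigma> ` ?L = ?L"
    by (simp add: endo_inj_surj finite_lists_length_eq)
  have "?S = (\<Sum>ks\<in>map ?\<sigma> ` ?L. prod_list (map ((^) \<omega>) ks) * F ks)"
    by (simp only: permutes)
  also have "\<dots> = (\<Sum>ks\<in>?L. prod_list (map ((^) \<omega>) (map ?\<sigma> ks)) * F (map ?\<sigma> ks))"
    unfolding sum.reindex[OF \<open>inj_on (map ?\<sigma>) ?L\<close>] comp_def ..
  also have "\<dots> = \<omega> ^ l * ?S"
    unfolding sum_distrib_left
  proof (rule sum.cong)
    fix ks assume "ks \<in> ?L"
    then have "set ks \<subseteq> {1..n}" "length ks = l" by auto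
    then show "prod_list (map ((^) \<omega>) (map ?\<sigma> ks)) * F (map ?\<sigma> ks)
      = \<omega> ^ l * (prod_list (map ((^) \<omega>) ks) * F ks)"
      by (simp only: twist invariant mult.assoc)
  qed simp
  finally have "\<omega> ^ l * ?S = ?S" by (rule sym)
  then show ?thesis
    using \<open>\<omega> ^ l \<noteq> 1\<close> by (simp only: mult_cancel_right2) simp
qed

lemma exchangeability_twisted_product_eq_0:
  assumes ex: "exchangeability_system \<phi> \<phi>t \<iota>"
    and root: "primitive_root_of_unity n \<omega>"
    and "0 < length xs" "length xs < n"
  shows "\<phi>t (prod_list (map (\<lambda>x. \<Sum>k=1..n. (\<omega> ^ k) *\<^sub>C \<iota> k x) xs)) = 0"
proof -
  have "ncps \<phi>t" using ex by (simp add: exchangeability_system_def)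
  then have "\<phi>t (prod_list (map (\<lambda>x. \<Sum>k=1..n. (\<omega> ^ k) *\<^sub>C \<iota> k x) xs))
    = (\<Sum>ks\<in>{ks. set ks \<subseteq> {1..n} \<and> length ks = length xs}.
        prod_list (map ((^) \<omega>) ks) * \<phi>t (mixed_word \<iota> xs ks))"
    by (simp add: prod_list_sum_expand ncps_sum ncps_def)
  also have "\<dots> = 0"
  proof (rule shift_invariant_twisted_sum_eq_0)
    show "0 < n" "\<omega> ^ n = 1" "\<omega> ^ length xs \<noteq> 1"
      using root assms(3,4) by (auto simp: primitive_root_of_unity_def)
    then show "\<phi>t (mixed_word \<iota> xs (map (cyclic_shift n) ks)) = \<phi>t (mixed_word \<iota> xs ks)" for ks
      by (simp add: exchangeability_mixed_word_relabel[OF ex bij_cyclic_shift])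
  qed
  finally show ?thesis .
qed

theorem lemma2p4:
  fixes \<phi> :: "'a::complex_algebra_1 \<Rightarrow> complex"
    and \<phi>t :: "'u::complex_algebra_1 \<Rightarrow> complex"
    and \<iota> :: "nat \<Rightarrow> 'a \<Rightarrow> 'u"
    and X :: "nat \<Rightarrow> 'a" and n m :: nat and \<omega> :: complex and j :: "nat \<Rightarrow> nat"
  assumes "exchangeability_system \<phi> \<phi>t \<iota>"
    and "primitive_root_of_unity n \<omega>"
    and "1 \<le> m" and "m < n"
    and "\<forall>i\<in>{1..m}. 1 \<le> j i \<and> j i \<le> n"
    and "\<forall>i\<in>{1..<m}. j i < j (Suc i)"
  shows "\<phi>t (prod_list (map (\<lambda>i. \<Sum>k=1..n. (\<omega> ^ k) *\<^sub>C \<iota> k (X (j i))) [1..<m+1])) = 0"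
  using exchangeability_twisted_product_eq_0[OF assms(1,2), of "map (X \<circ> j) [1..<m+1]"] assms(3,4)
  by (simp add: comp_def)

end
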